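(* For every $d\ge 2$, $\mu(\mathit{BF}(d))=2^{d+1}-2$.
   Context: Binary strings $c=c_0\cdots c_{d-1}$ have positions $0,\dots,d-1$ from the left; $c(i)$ is $c$ with bit $i$ complemented. $\mathit{BF}(d)$ has vertex set $\{[\ell,c]:\ell\in\{0,\dots,d\},\ c\in\{0,1\}^d\}$; for $\ell\in\{0,\dots,d-1\}$, $[\ell,c]$ is adjacent to $[\ell+1,c']$ iff $c'=c$ or $c'=c(\ell)$, and there are no other edges. For a connected graph $G$ and $X\subseteq V(G)$, two vertices $x,y$ are $X$-visible if some shortest $x,y$-path has no internal vertex in $X$; $X$ is a mutual-visibility set if every two vertices of $X$ are $X$-visible; $\mu(G)$ is the maximum size of a mutual-visibility set. *)

theory Defs
  imports Main
begin

definition is_walk :: "'a set \<Rightarrow> ('a \<Rightarrow> 'a \<Rightarrow> bool) \<Rightarrow> 'a list \<Rightarrow> bool" where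
  "is_walk V E xs \<longleftrightarrow> xs \<noteq> [] \<and> set xs \<subseteq> V \<and> (\<forall>i. Suc i < length xs \<longrightarrow> E (xs ! i) (xs ! Suc i))"

definition walk_betw :: "'a set \<Rightarrow> ('a \<Rightarrow> 'a \<Rightarrow> bool) \<Rightarrow> 'a \<Rightarrow> 'a \<Rightarrow> 'a list \<Rightarrow> bool" where
  "walk_betw V E x y xs \<longleftrightarrow> is_walk V E xs \<and> hd xs = x \<and> last xs = y"

text \<open>Graph distance (number of edges of a shortest walk; the graph is connected).\<close>
definition gdist :: "'a set \<Rightarrow> ('a \<Rightarrow> 'a \<Rightarrow> bool) \<Rightarrow> 'a \<Rightarrow> 'a \<Rightarrow> nat" where
  "gdist V E x y = (LEAST n. \<exists>xs. walk_betw V E x y xs \<and> length xs = Suc n)"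

definition shortest_path :: "'a set \<Rightarrow> ('a \<Rightarrow> 'a \<Rightarrow> bool) \<Rightarrow> 'a \<Rightarrow> 'a \<Rightarrow> 'a list \<Rightarrow> bool" where
  "shortest_path V E x y xs \<longleftrightarrow> walk_betw V E x y xs \<and> length xs = Suc (gdist V E x y)"

definition internal :: "'a list \<Rightarrow> 'a set" where
  "internal xs = set (butlast (tl xs))"

definition X_visible :: "'a set \<Rightarrow> ('a \<Rightarrow> 'a \<Rightarrow> bool) \<Rightarrow> 'a set \<Rightarrow> 'a \<Rightarrow> 'a \<Rightarrow> bool" where
  "X_visible V E X x y \<longleftrightarrow> (\<exists>xs. shortest_path V E x y xs \<and> internal xs \<inter> X = {})"

definition mutual_visibility_set :: "'a set \<Rightarrow> ('a \<Rightarrow> 'a \<Rightarrow> bool) \<Rightarrow> 'a set \<Rightarrow> bool" where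
  "mutual_visibility_set V E X \<longleftrightarrow> X \<subseteq> V \<and> (\<forall>x\<in>X. \<forall>y\<in>X. X_visible V E X x y)"

definition mu :: "'a set \<Rightarrow> ('a \<Rightarrow> 'a \<Rightarrow> bool) \<Rightarrow> nat" where
  "mu V E = Max {card X | X. mutual_visibility_set V E X}"

text \<open>Butterfly BF(d): vertices [l,c] with 0 \<le> l \<le> d and c a binary string of
  length d (bit list, position i = c ! i). c(i) = c[i := \<not> c!i].\<close>

definition bf_V :: "nat \<Rightarrow> (nat \<times> bool list) set" where
  "bf_V d = {(l, c). l \<le> d \<and> length c = d}"

definition flip :: "bool list \<Rightarrow> nat \<Rightarrow> bool list" where
  "flip c i = c[i := \<not> c ! i]"

definition bf_step :: "nat \<Rightarrow> nat \<times> bool list \<Rightarrow> nat \<times> bool list \<Rightarrow> bool" where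
  "bf_step d u v \<longleftrightarrow> u \<in> bf_V d \<and> v \<in> bf_V d \<and> fst u < d \<and> fst v = Suc (fst u) \<and>
     (snd v = snd u \<or> snd v = flip (snd u) (fst u))"

definition bf_E :: "nat \<Rightarrow> nat \<times> bool list \<Rightarrow> nat \<times> bool list \<Rightarrow> bool" where
  "bf_E d u v \<longleftrightarrow> bf_step d u v \<or> bf_step d v u"

end

theory Submission
  imports Defs
begin

text \<open>
  Call a path of \<open>BF(d)\<close> monotone if it climbs from level 0 to level \<open>d\<close>. A monotone path
  carries at most two vertices of a mutual-visibility set \<open>X\<close>: any third one would be internal
  to the unique shortest path between the outer two. The \<open>2\<^sup>d\<close> columns \<open>{[l, c] | l \<le> d}\<close>
  partition the vertices into monotone paths, so \<open>|X| \<le> 2\<^sup>d\<^sup>+\<^sup>1\<close>; more generally every two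
  disjoint monotone paths extend to such a partition, so their deficits (fewer than two points of
  \<open>X\<close>) add up to at most \<open>2\<^sup>d\<^sup>+\<^sup>1 - |X|\<close>.

  If \<open>|X| \<ge> 2\<^sup>d\<^sup>+\<^sup>1 - 1\<close>, all columns but one, \<open>e\<close>, are full and \<open>e\<close> carries a point of \<open>X\<close>.
  A shortest \<open>X\<close>-avoiding path between the lowest points of \<open>X\<close> in the columns \<open>e(0)\<close> and
  \<open>e(0)(d-1)\<close> has to climb to level \<open>d\<close> and come down again; its two halves are monotone paths,
  and the deficit count forces its summit to be \<open>[d, e]\<close> and \<open>[d, e(d-1)] \<in> X\<close>. By the
  reflection \<open>[l, c] \<mapsto> [d-l, rev c]\<close> also \<open>[0, e] \<notin> X\<close> and \<open>[0, e(0)] \<in> X\<close>; then the monotone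
  path \<open>[0, e(0)], [1, e], \<dots>, [d-1, e], [d, e(d-1)]\<close> carries three points of \<open>X\<close>.

  Conversely, levels 0 and \<open>d\<close> without one vertex each form a mutual-visibility set of size
  \<open>2\<^sup>d\<^sup>+\<^sup>1 - 2\<close>.
\<close>

lemma length_flip [simp]: "length (flip c i) = length c"
  by (simp add: flip_def)

lemma flip_flip [simp]: "i < length c \<Longrightarrow> flip (flip c i) i = c"
  by (simp add: flip_def)

lemma nth_flip: "b < length c \<Longrightarrow> flip c i ! b = (if b = i then \<not> c ! b else c ! b)"
  by (simp add: flip_def)

lemma flip_neq: "i < length c \<Longrightarrow> flip c i \<noteq> c"
  by (metis flip_def nth_list_update_eq)

lemma flip_eq_flip_iff: "i < length c \<Longrightarrow> i < length c' \<Longrightarrow> flip c i = flip c' i \<longleftrightarrow> c = c'"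
  by (metis flip_flip length_flip)

lemma drop_flip: "l < h \<Longrightarrow> drop h (flip w l) = drop h w"
  by (simp add: flip_def)

lemma rev_flip: "length c = d \<Longrightarrow> k < d \<Longrightarrow> rev (flip c k) = flip (rev c) (d - Suc k)"
  by (simp add: flip_def rev_update rev_nth)

lemma card_words: "card {c :: bool list. length c = d} = 2 ^ d"
  using card_lists_length_eq[of "UNIV :: bool set" d] by simp

lemma finite_words: "finite {c :: bool list. length c = d}"
  using finite_lists_length_eq[of "UNIV :: bool set" d] by simp

lemma is_walk_nth: "is_walk V E xs \<Longrightarrow> Suc t < length xs \<Longrightarrow> E (xs ! t) (xs ! Suc t)"
  by (simp add: is_walk_def)

lemma is_walk_nth_mem: "is_walk V E xs \<Longrightarrow> t < length xs \<Longrightarrow> xs ! t \<in> V"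
  unfolding is_walk_def by auto

lemma walk_betw_ends:
  assumes "walk_betw V E x y xs"
  shows "is_walk V E xs" "xs \<noteq> []" "xs ! 0 = x" "xs ! (length xs - 1) = y"
  using assms by (auto simp: walk_betw_def is_walk_def hd_conv_nth last_conv_nth)

lemma walk_betw_map_upt:
  assumes "\<forall>t\<le>n. f t \<in> V" and "\<forall>t<n. E (f t) (f (Suc t))"
  shows "walk_betw V E (f 0) (f n) (map f [0..<Suc n])"
  unfolding walk_betw_def is_walk_def using assms
  by (auto simp: hd_map last_map nth_map_upt simp del: upt_Suc)

lemma walk_betw_rev:
  assumes w: "walk_betw V E x y xs" and sym: "\<And>u v. E u v \<Longrightarrow> E v u"
  shows "walk_betw V E y x (rev xs)"
proof -
  have "E (rev xs ! t) (rev xs ! Suc t)" if t: "Suc t < length xs" for t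
  proof -
    define k where "k = length xs - Suc (Suc t)"
    have "E (xs ! k) (xs ! Suc k)"
      using is_walk_nth[OF walk_betw_ends(1)[OF w]] t unfolding k_def by simp
    moreover have "rev xs ! t = xs ! Suc k" "rev xs ! Suc t = xs ! k"
      using t unfolding k_def by (simp_all add: rev_nth Suc_diff_Suc)
    ultimately show ?thesis using sym by simp
  qed
  then show ?thesis using w unfolding walk_betw_def is_walk_def by (simp add: hd_rev last_rev)
qed

lemma internal_iff_nth: "x \<in> internal xs \<longleftrightarrow> (\<exists>k. 0 < k \<and> Suc k < length xs \<and> x = xs ! k)"
proof
  assume "x \<in> internal xs"
  then obtain m where "m < length (butlast (tl xs))" "x = butlast (tl xs) ! m"
    unfolding internal_def by (metis in_set_conv_nth)
  then show "\<exists>k. 0 < k \<and> Suc k < length xs \<and> x = xs ! k"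
    by (intro exI[of _ "Suc m"]) (auto simp: nth_butlast nth_tl)
next
  assume "\<exists>k. 0 < k \<and> Suc k < length xs \<and> x = xs ! k"
  then obtain k where k: "0 < k" "Suc k < length xs" "x = xs ! k" by blast
  then have "butlast (tl xs) ! (k - 1) = x" "k - 1 < length (butlast (tl xs))"
    by (auto simp: nth_butlast nth_tl)
  then show "x \<in> internal xs" unfolding internal_def by (metis nth_mem)
qed

lemma nth_mem_internal: "0 < k \<Longrightarrow> Suc k < length xs \<Longrightarrow> xs ! k \<in> internal xs"
  unfolding internal_iff_nth by blast

lemma internal_rev [simp]: "internal (rev xs) = internal xs"
proof -
  have "tl (rev xs) = rev (butlast xs)"
    by (metis butlast_rev rev_rev_ident)
  then show ?thesis unfolding internal_def by (simp add: butlast_tl)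
qed

lemma internal_map_upt: "x \<in> internal (map f [0..<Suc n]) \<Longrightarrow> \<exists>k. 0 < k \<and> k < n \<and> x = f k"
  unfolding internal_iff_nth by (auto simp del: upt_Suc)

lemma gdist_le: "walk_betw V E x y xs \<Longrightarrow> gdist V E x y \<le> length xs - 1"
  unfolding gdist_def
  by (rule Least_le) (metis One_nat_def Suc_pred is_walk_def length_greater_0_conv walk_betw_def)

lemma gdist_eq:
  assumes "walk_betw V E x y xs" and "\<And>ys. walk_betw V E x y ys \<Longrightarrow> length xs \<le> length ys"
  shows "gdist V E x y = length xs - 1"
  unfolding gdist_def
proof (rule Least_equality)
  show "\<exists>ys. walk_betw V E x y ys \<and> length ys = Suc (length xs - 1)"
    using assms(1) walk_betw_ends(2)[OF assms(1)] by auto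
next
  fix m assume "\<exists>ys. walk_betw V E x y ys \<and> length ys = Suc m"
  then show "length xs - 1 \<le> m" using assms(2) by force
qed

lemma X_visibleI:
  assumes "walk_betw V E x y xs" "internal xs \<inter> X = {}"
    and "\<And>ys. walk_betw V E x y ys \<Longrightarrow> length xs \<le> length ys"
  shows "X_visible V E X x y"
proof -
  have "length xs = Suc (gdist V E x y)"
    using gdist_eq[OF assms(1,3)] walk_betw_ends(2)[OF assms(1)] by simp
  then show ?thesis using assms(1,2) unfolding X_visible_def shortest_path_def by blast
qed

lemma X_visibleE:
  assumes "X_visible V E X x y"
  obtains xs where "walk_betw V E x y xs" "length xs = Suc (gdist V E x y)" "internal xs \<inter> X = {}"
  using assms unfolding X_visible_def shortest_path_def by blast

lemma X_visible_refl: "x \<in> V \<Longrightarrow> X_visible V E X x x"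
  by (rule X_visibleI[of _ _ _ _ "[x]"]) (auto simp: walk_betw_def is_walk_def internal_def Suc_le_eq)

locale graph_involution =
  fixes V :: "'a set" and E :: "'a \<Rightarrow> 'a \<Rightarrow> bool" and f :: "'a \<Rightarrow> 'a"
  assumes map_vertex: "x \<in> V \<Longrightarrow> f x \<in> V"
    and involutive: "x \<in> V \<Longrightarrow> f (f x) = x"
    and map_edge: "E x y \<Longrightarrow> E (f x) (f y)"
begin

lemma walk_betw_map: "walk_betw V E x y xs \<Longrightarrow> walk_betw V E (f x) (f y) (map f xs)"
  unfolding walk_betw_def is_walk_def using map_vertex map_edge by (auto simp: hd_map last_map)

lemma walk_betw_map_iff:
  assumes "x \<in> V" "y \<in> V"
  shows "(\<exists>xs. walk_betw V E (f x) (f y) xs \<and> length xs = n) \<longleftrightarrow> (\<exists>xs. walk_betw V E x y xs \<and> length xs = n)"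
  using walk_betw_map[of "f x" "f y"] walk_betw_map[of x y] assms involutive by force

lemma gdist_map: "x \<in> V \<Longrightarrow> y \<in> V \<Longrightarrow> gdist V E (f x) (f y) = gdist V E x y"
  unfolding gdist_def using walk_betw_map_iff by simp

lemma inj_on_vertices: "inj_on f V"
  by (metis inj_onI involutive)

lemma X_visible_image:
  assumes vis: "X_visible V E X x y" and X: "X \<subseteq> V" and xy: "x \<in> V" "y \<in> V"
  shows "X_visible V E (f ` X) (f x) (f y)"
proof -
  obtain xs where xs: "walk_betw V E x y xs" "length xs = Suc (gdist V E x y)" "internal xs \<inter> X = {}"
    using vis by (rule X_visibleE)
  have "internal xs \<subseteq> V"
  proof
    fix p assume "p \<in> internal xs"
    then obtain k where "Suc k < length xs" "p = xs ! k" unfolding internal_iff_nth by blast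
    then show "p \<in> V" using is_walk_nth_mem[OF walk_betw_ends(1)[OF xs(1)], of k] by simp
  qed
  then have "internal (map f xs) \<inter> f ` X = {}"
    using xs(3) X inj_on_vertices
    by (auto simp: internal_def map_tl[symmetric] map_butlast[symmetric] inj_on_def) blast
  then show ?thesis
    using walk_betw_map[OF xs(1)] xs(2) gdist_map[OF xy]
    unfolding X_visible_def shortest_path_def by auto
qed

lemma mutual_visibility_set_image:
  "mutual_visibility_set V E X \<Longrightarrow> mutual_visibility_set V E (f ` X)"
  unfolding mutual_visibility_set_def using X_visible_image map_vertex by blast

lemma card_image_eq: "X \<subseteq> V \<Longrightarrow> card (f ` X) = card X"
  by (meson card_image inj_on_subset inj_on_vertices)

end

lemma in_bf_V [simp]: "(l, c) \<in> bf_V d \<longleftrightarrow> l \<le> d \<and> length c = d"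
  by (simp add: bf_V_def)

lemma finite_bf_V: "finite (bf_V d)"
proof -
  have "bf_V d = {..d} \<times> {c. length c = d}" unfolding bf_V_def by auto
  then show ?thesis using finite_words by simp
qed

lemma bf_step_iff:
  "bf_step d (l, c) (l', c') \<longleftrightarrow>
     l < d \<and> l' = Suc l \<and> length c = d \<and> length c' = d \<and> (c' = c \<or> c' = flip c l)"
  unfolding bf_step_def by auto

lemma bf_E_sym: "bf_E d u v \<Longrightarrow> bf_E d v u"
  unfolding bf_E_def by auto

lemma bf_E_level: "bf_E d u v \<Longrightarrow> fst v = Suc (fst u) \<or> fst u = Suc (fst v)"
  unfolding bf_E_def bf_step_def by auto

lemma bf_E_up: "bf_E d u v \<Longrightarrow> fst v = Suc (fst u) \<Longrightarrow> snd v = snd u \<or> snd v = flip (snd u) (fst u)"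
  unfolding bf_E_def bf_step_def by auto

lemma bf_E_upI:
  "l < d \<Longrightarrow> length c = d \<Longrightarrow> c' = c \<or> c' = flip c l \<Longrightarrow> bf_E d (l, c) (Suc l, c')"
  unfolding bf_E_def by (auto simp: bf_step_iff)

definition bf_reflect :: "nat \<Rightarrow> nat \<times> bool list \<Rightarrow> nat \<times> bool list" where
  "bf_reflect d x = (d - fst x, rev (snd x))"

lemma bf_reflect_simp [simp]: "bf_reflect d (l, c) = (d - l, rev c)"
  by (simp add: bf_reflect_def)

lemma bf_step_reflect:
  assumes "bf_step d (l, c) (l', c')"
  shows "bf_step d (d - l', rev c') (d - l, rev c)"
proof -
  have h: "l < d" "l' = Suc l" "length c = d" "length c' = d" "c' = c \<or> c' = flip c l"
    using assms by (auto simp: bf_step_iff)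
  then have "c = c' \<or> c = flip c' l" by auto
  then have "rev c = rev c' \<or> rev c = flip (rev c') (d - Suc l)"
    using rev_flip[of c' d l] h by auto
  with h show ?thesis by (simp add: bf_step_iff Suc_diff_Suc)
qed

interpretation bf_reflect: graph_involution "bf_V d" "bf_E d" "bf_reflect d" for d
proof
  fix x assume "x \<in> bf_V d"
  then show "bf_reflect d x \<in> bf_V d" "bf_reflect d (bf_reflect d x) = x"
    by (cases x; simp)+
next
  fix x y assume "bf_E d x y"
  then show "bf_E d (bf_reflect d x) (bf_reflect d y)"
    unfolding bf_E_def using bf_step_reflect[of d "fst x" "snd x" "fst y" "snd y"]
      bf_step_reflect[of d "fst y" "snd y" "fst x" "snd x"]
    by (auto simp: bf_reflect_def)
qed

lemma bf_reflect_image_mem: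
  assumes "X \<subseteq> bf_V d"
  shows "(l, c) \<in> bf_reflect d ` X \<longleftrightarrow> l \<le> d \<and> length c = d \<and> (d - l, rev c) \<in> X"
proof
  assume "(l, c) \<in> bf_reflect d ` X"
  then obtain l' c' where "(l', c') \<in> X" "(l, c) = (d - l', rev c')" by auto
  with assms show "l \<le> d \<and> length c = d \<and> (d - l, rev c) \<in> X" by auto
next
  assume "l \<le> d \<and> length c = d \<and> (d - l, rev c) \<in> X"
  then show "(l, c) \<in> bf_reflect d ` X" by (auto intro: image_eqI[of _ _ "(d - l, rev c)"])
qed

lemma walk_level_bound:
  assumes w: "is_walk (bf_V d) (bf_E d) xs" and "s \<le> t" and "t < length xs"
  shows "fst (xs ! t) \<le> fst (xs ! s) + (t - s) \<and> fst (xs ! s) \<le> fst (xs ! t) + (t - s)"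
  using assms(2,3)
proof (induction t)
  case (Suc t)
  show ?case
  proof (cases "s = Suc t")
    case False
    then have "s \<le> t" using Suc.prems by simp
    moreover have "bf_E d (xs ! t) (xs ! Suc t)" using is_walk_nth[OF w] Suc.prems by simp
    ultimately show ?thesis using Suc bf_E_level[of d "xs ! t" "xs ! Suc t"] by auto
  qed simp
qed simp

lemma walk_betw_level_gap:
  assumes "walk_betw (bf_V d) (bf_E d) (i, a) (j, b) xs"
  shows "j \<le> i + (length xs - 1)"
  using walk_level_bound[OF walk_betw_ends(1)[OF assms], of 0 "length xs - 1"] walk_betw_ends[OF assms]
  by simp

lemma walk_level_climbs:
  assumes w: "is_walk (bf_V d) (bf_E d) xs" and "n < length xs"
    and "fst (xs ! 0) = i" and "fst (xs ! n) = i + n" and "t \<le> n"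
  shows "fst (xs ! t) = i + t"
  using walk_level_bound[OF w, of 0 t] walk_level_bound[OF w, of t n] assms by auto

text \<open>Edges below level \<open>h\<close> only flip bits below \<open>h\<close>.\<close>

lemma walk_below_drop_invariant:
  assumes w: "is_walk (bf_V d) (bf_E d) xs"
    and low: "\<forall>t<length xs. fst (xs ! t) \<le> h" and "t < length xs"
  shows "drop h (snd (xs ! t)) = drop h (snd (xs ! 0))"
  using assms(3)
proof (induction t)
  case (Suc t)
  have e: "bf_E d (xs ! t) (xs ! Suc t)" using is_walk_nth[OF w] Suc.prems by simp
  have lv: "fst (xs ! t) \<le> h" "fst (xs ! Suc t) \<le> h" using low Suc.prems by auto
  have "drop h (snd (xs ! Suc t)) = drop h (snd (xs ! t))"
  proof (cases "fst (xs ! Suc t) = Suc (fst (xs ! t))")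
    case True
    then show ?thesis using bf_E_up[OF e True] lv drop_flip by auto
  next
    case False
    then have up: "fst (xs ! t) = Suc (fst (xs ! Suc t))" using bf_E_level[OF e] by auto
    show ?thesis using bf_E_up[OF bf_E_sym[OF e] up] lv up drop_flip by auto
  qed
  then show ?case using Suc by simp
qed simp

lemma walk_betw_rises_above:
  assumes w: "walk_betw (bf_V d) (bf_E d) (i, a) (j, b) xs" and "drop h a \<noteq> drop h b"
  obtains t where "t < length xs" "h < fst (xs ! t)"
proof -
  have "\<not> (\<forall>t<length xs. fst (xs ! t) \<le> h)"
  proof
    assume "\<forall>t<length xs. fst (xs ! t) \<le> h"
    from walk_below_drop_invariant[OF walk_betw_ends(1)[OF w] this, of "length xs - 1"]
    show False using walk_betw_ends[OF w] assms(2) by simp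
  qed
  then show ?thesis using that by (auto simp: not_le)
qed

lemma walk_betw_length_suffix_differ:
  assumes w: "walk_betw (bf_V d) (bf_E d) (i, a) (j, b) xs" and "drop h a \<noteq> drop h b"
  shows "(Suc h - i) + (Suc h - j) < length xs"
proof -
  obtain t where t: "t < length xs" "h < fst (xs ! t)"
    using walk_betw_rises_above[OF assms] .
  note bound = walk_level_bound[OF walk_betw_ends(1)[OF w]]
  have "fst (xs ! t) \<le> i + t" using bound[of 0 t] t walk_betw_ends[OF w] by simp
  moreover have "fst (xs ! t) \<le> j + (length xs - 1 - t)"
    using bound[of t "length xs - 1"] t walk_betw_ends[OF w] by simp
  ultimately have "Suc h - i \<le> t" "Suc h - j \<le> length xs - 1 - t" using t by auto
  then show ?thesis using t by linarith
qed

section \<open>Monotone paths\<close>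

definition monotone_segment :: "nat \<Rightarrow> nat \<Rightarrow> nat \<Rightarrow> (nat \<Rightarrow> bool list) \<Rightarrow> bool" where
  "monotone_segment d i j U \<longleftrightarrow> (\<forall>l. i \<le> l \<and> l \<le> j \<longrightarrow> length (U l) = d) \<and>
     (\<forall>l. i \<le> l \<and> l < j \<longrightarrow> U (Suc l) = U l \<or> U (Suc l) = flip (U l) l)"

abbreviation monotone_path :: "nat \<Rightarrow> (nat \<Rightarrow> bool list) \<Rightarrow> bool" where
  "monotone_path d W \<equiv> monotone_segment d 0 d W"

lemma monotone_segment_subinterval:
  "monotone_segment d i j U \<Longrightarrow> i \<le> i' \<Longrightarrow> j' \<le> j \<Longrightarrow> monotone_segment d i' j' U"
  unfolding monotone_segment_def by auto

lemma monotone_segment_length: "monotone_segment d i j U \<Longrightarrow> i \<le> l \<Longrightarrow> l \<le> j \<Longrightarrow> length (U l) = d"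
  unfolding monotone_segment_def by auto

lemma monotone_segment_step:
  "monotone_segment d i j U \<Longrightarrow> i \<le> l \<Longrightarrow> l < j \<Longrightarrow> U (Suc l) = U l \<or> U (Suc l) = flip (U l) l"
  unfolding monotone_segment_def by auto

lemma monotone_path_const: "length c = d \<Longrightarrow> monotone_path d (\<lambda>l. c)"
  unfolding monotone_segment_def by simp

text \<open>Along a monotone segment, bit \<open>b\<close> can only change between levels \<open>b\<close> and \<open>b + 1\<close>.\<close>

lemma monotone_segment_nth_eq:
  assumes U: "monotone_segment d i j U" and "i \<le> l" "l \<le> l'" "l' \<le> j" "b < d" "b < l \<or> l' \<le> b"
  shows "U l' ! b = U l ! b"
  using assms(3,4,6)
proof (induction l')
  case (Suc m)
  show ?case
  proof (cases "l = Suc m")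
    case False
    then have m: "l \<le> m" "m < j" "b \<noteq> m" using Suc.prems by auto
    have "length (U m) = d" using monotone_segment_length[OF U] m assms(2) by simp
    then show ?thesis
      using Suc m monotone_segment_step[OF U, of m] assms(2,5) by (auto simp: nth_flip)
  qed simp
qed simp

lemma monotone_segment_unique:
  assumes U: "monotone_segment d i j U" and U': "monotone_segment d i j U'"
    and "U i = U' i" "U j = U' j" "i \<le> k" "k \<le> j"
  shows "U k = U' k"
proof (rule nth_equalityI)
  show "length (U k) = length (U' k)"
    using monotone_segment_length[OF U] monotone_segment_length[OF U'] assms by simp
next
  fix b assume "b < length (U k)"
  then have b: "b < d" using monotone_segment_length[OF U] assms by simp
  note same = monotone_segment_nth_eq[OF U] monotone_segment_nth_eq[OF U']
  show "U k ! b = U' k ! b"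
  proof (cases "i \<le> b \<and> b < k")
    case True
    then show ?thesis using same[of k j b] assms b by auto
  next
    case False
    then show ?thesis using same[of i k b] assms b by auto
  qed
qed

lemma monotone_segment_edge:
  assumes U: "monotone_segment d i j U" and "i \<le> l" "l < j" "j \<le> d"
  shows "bf_E d (l, U l) (Suc l, U (Suc l))"
  using assms monotone_segment_length[OF U, of l] monotone_segment_step[OF U, of l]
  by (simp add: bf_E_upI)

lemma monotone_segment_walk:
  assumes U: "monotone_segment d i j U" and "i \<le> j" "j \<le> d"
  shows "walk_betw (bf_V d) (bf_E d) (i, U i) (j, U j) (map (\<lambda>t. (i + t, U (i + t))) [0..<Suc (j - i)])"
proof -
  have "walk_betw (bf_V d) (bf_E d) (i + 0, U (i + 0)) (i + (j - i), U (i + (j - i)))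
     (map (\<lambda>t. (i + t, U (i + t))) [0..<Suc (j - i)])"
    by (rule walk_betw_map_upt)
      (use assms monotone_segment_length[OF U] monotone_segment_edge[OF U] in auto)
  then show ?thesis using assms by simp
qed

text \<open>
  With truncated subtraction,
  \<open>l - i = 0\<close> for \<open>l < i\<close>, so the segment is extended downwards by the column of its start.
\<close>

lemma climbing_walk_monotone_segment:
  assumes w: "is_walk (bf_V d) (bf_E d) xs" and n: "n < length xs"
    and lv: "\<And>t. t \<le> n \<Longrightarrow> fst (xs ! t) = i + t"
  shows "monotone_segment d 0 (i + n) (\<lambda>l. snd (xs ! (l - i)))"
  unfolding monotone_segment_def
proof (intro conjI allI impI)
  fix l assume "0 \<le> l \<and> l \<le> i + n"
  then have "xs ! (l - i) \<in> bf_V d" using is_walk_nth_mem[OF w] n by simp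
  then show "length (snd (xs ! (l - i))) = d" by (cases "xs ! (l - i)") simp
next
  fix l assume l: "0 \<le> l \<and> l < i + n"
  show "snd (xs ! (Suc l - i)) = snd (xs ! (l - i)) \<or>
      snd (xs ! (Suc l - i)) = flip (snd (xs ! (l - i))) l"
  proof (cases "l < i")
    case False
    then have idx: "Suc l - i = Suc (l - i)" "Suc (l - i) < length xs" using l n by auto
    have lv': "fst (xs ! Suc (l - i)) = Suc (fst (xs ! (l - i)))" "fst (xs ! (l - i)) = l"
      using lv[of "l - i"] lv[of "Suc (l - i)"] l False by auto
    from bf_E_up[OF is_walk_nth[OF w idx(2)] lv'(1)] show ?thesis
      unfolding idx(1) lv'(2) .
  qed simp
qed

lemma walk_along_monotone_segment:
  assumes U: "monotone_segment d i j U" and "i \<le> j" "j \<le> d"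
    and w: "walk_betw (bf_V d) (bf_E d) (i, U i) (j, U j) xs" and short: "length xs \<le> Suc (j - i)"
  shows "length xs = Suc (j - i)" and "\<And>l. i \<le> l \<Longrightarrow> l \<le> j \<Longrightarrow> xs ! (l - i) = (l, U l)"
proof -
  note ends = walk_betw_ends[OF w]
  show len: "length xs = Suc (j - i)" using walk_betw_level_gap[OF w] short ends(2) assms(2) by (cases xs) auto
  have lv: "fst (xs ! t) = i + t" if "t \<le> j - i" for t
    by (rule walk_level_climbs[OF ends(1), of "j - i"]) (use that len ends assms(2) in auto)
  have "monotone_segment d 0 (i + (j - i)) (\<lambda>l. snd (xs ! (l - i)))"
    by (rule climbing_walk_monotone_segment[OF ends(1) _ lv]) (use len in simp)
  then have "monotone_segment d i j (\<lambda>l. snd (xs ! (l - i)))"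
    using monotone_segment_subinterval[of d 0 "i + (j - i)" _ i j] assms(2) by simp
  then have "snd (xs ! (l - i)) = U l" if "i \<le> l" "l \<le> j" for l
    by (rule monotone_segment_unique[OF _ U]) (use that ends len in auto)
  then show "xs ! (l - i) = (l, U l)" if "i \<le> l" "l \<le> j" for l
    using lv[of "l - i"] that by (simp add: prod_eq_iff)
qed

definition hit_count :: "nat \<Rightarrow> (nat \<times> bool list) set \<Rightarrow> (nat \<Rightarrow> bool list) \<Rightarrow> nat" where
  "hit_count d X W = card {l. l \<le> d \<and> (l, W l) \<in> X}"

lemma hit_count_le_1:
  assumes "{l. l \<le> d \<and> (l, W l) \<in> X} \<subseteq> {i}"
  shows "hit_count d X W \<le> 1"
  unfolding hit_count_def using card_mono[OF _ assms] by simp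

lemma hit_count_cong: "(\<And>l. l \<le> d \<Longrightarrow> W l = W' l) \<Longrightarrow> hit_count d X W = hit_count d X W'"
  unfolding hit_count_def by (metis (no_types, lifting))

lemma three_increasing_elements:
  fixes S :: "nat set"
  assumes "finite S" "3 \<le> card S"
  obtains i k j where "i \<in> S" "k \<in> S" "j \<in> S" "i < k" "k < j"
proof -
  have "S \<noteq> {}" using assms by auto
  have "\<not> S \<subseteq> {Min S, Max S}"
  proof
    assume "S \<subseteq> {Min S, Max S}"
    then have "card S \<le> card {Min S, Max S}" by (rule card_mono[rotated]) simp
    also have "\<dots> \<le> 2" by (cases "Min S = Max S") simp_all
    finally have "card S \<le> 2" .
    then show False using assms by simp
  qed
  then obtain k where k: "k \<in> S" "k \<noteq> Min S" "k \<noteq> Max S" by blast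
  have "Min S < k" "k < Max S" using Min_le[OF assms(1) k(1)] Max_ge[OF assms(1) k(1)] k by auto
  then show ?thesis using that[OF Min_in k(1) Max_in] assms(1) \<open>S \<noteq> {}\<close> by simp
qed

lemma hit_count_le_2:
  assumes X: "mutual_visibility_set (bf_V d) (bf_E d) X" and W: "monotone_path d W"
  shows "hit_count d X W \<le> 2"
proof (rule ccontr)
  let ?S = "{l. l \<le> d \<and> (l, W l) \<in> X}"
  assume "\<not> hit_count d X W \<le> 2"
  then have card3: "3 \<le> card ?S" unfolding hit_count_def by simp
  have fin: "finite ?S" by (rule finite_subset[of _ "{..d}"]) auto
  obtain i k j where ikj: "i \<in> ?S" "k \<in> ?S" "j \<in> ?S" "i < k" "k < j"
    by (rule three_increasing_elements[OF fin card3])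
  have "X_visible (bf_V d) (bf_E d) X (i, W i) (j, W j)"
    using X ikj unfolding mutual_visibility_set_def by auto
  then obtain xs where xs: "walk_betw (bf_V d) (bf_E d) (i, W i) (j, W j) xs"
      "length xs = Suc (gdist (bf_V d) (bf_E d) (i, W i) (j, W j))" "internal xs \<inter> X = {}"
    by (rule X_visibleE)
  have Wij: "monotone_segment d i j W" by (rule monotone_segment_subinterval[OF W]) (use ikj in auto)
  have "gdist (bf_V d) (bf_E d) (i, W i) (j, W j) \<le> j - i"
    using gdist_le[OF monotone_segment_walk[OF Wij]] ikj by simp
  then have "length xs \<le> Suc (j - i)" using xs(2) by simp
  note along = walk_along_monotone_segment[OF Wij _ _ xs(1) this]
  have "xs ! (k - i) \<in> internal xs"
    by (rule nth_mem_internal) (use ikj along(1) in auto)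
  then show False using along(2)[of k] ikj xs(3) by auto
qed

section \<open>Partitions into monotone paths\<close>

text \<open>
  A switching family chooses at every level \<open>l\<close> an involution of the words that is a
  perfect matching by edges of \<open>BF(d)\<close> between levels \<open>l\<close> and \<open>l + 1\<close>. Following it from every
  word at level 0 partitions the vertices into \<open>2\<^sup>d\<close> monotone paths.
\<close>

definition switching_family :: "nat \<Rightarrow> (nat \<Rightarrow> bool list \<Rightarrow> bool list) \<Rightarrow> bool" where
  "switching_family d f \<longleftrightarrow>
     (\<forall>l<d. \<forall>w. length w = d \<longrightarrow> f l (f l w) = w \<and> (f l w = w \<or> f l w = flip w l))"

fun switch_path :: "(nat \<Rightarrow> bool list \<Rightarrow> bool list) \<Rightarrow> bool list \<Rightarrow> nat \<Rightarrow> bool list" where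
  "switch_path f a 0 = a"
| "switch_path f a (Suc l) = f l (switch_path f a l)"

lemma switching_familyD:
  assumes "switching_family d f" "l < d" "length w = d"
  shows "f l (f l w) = w" "f l w = w \<or> f l w = flip w l" "length (f l w) = d"
  using assms unfolding switching_family_def by (metis length_flip)+

lemma switch_path_monotone:
  assumes f: "switching_family d f" and "length a = d"
  shows "monotone_path d (switch_path f a)"
proof -
  have len: "length (switch_path f a l) = d" if "l \<le> d" for l
    using that assms(2) by (induction l) (auto simp: switching_familyD(3)[OF f])
  then show ?thesis unfolding monotone_segment_def using switching_familyD(2)[OF f] by simp
qed

lemma switch_path_bij:
  assumes f: "switching_family d f" and "l \<le> d"
  shows "bij_betw (\<lambda>a. switch_path f a l) {c. length c = d} {c. length c = d}"
  using assms(2)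
proof (induction l)
  case 0
  then show ?case by (simp add: bij_betw_def)
next
  case (Suc l)
  have "bij_betw (f l) {c. length c = d} {c. length c = d}"
    by (rule bij_betw_byWitness[where f' = "f l"]) (use switching_familyD[OF f] Suc.prems in auto)
  then have "bij_betw (f l \<circ> (\<lambda>a. switch_path f a l)) {c. length c = d} {c. length c = d}"
    using Suc by (auto intro: bij_betw_trans)
  then show ?case by (simp add: comp_def)
qed

lemma card_eq_sum_levels:
  assumes "X \<subseteq> bf_V d"
  shows "card X = (\<Sum>l\<le>d. card {w. (l, w) \<in> X})"
proof -
  have eq: "X = (\<Union>l\<in>{..d}. Pair l ` {w. (l, w) \<in> X})" using assms unfolding bf_V_def by auto
  have fin: "finite {w. (l, w) \<in> X}" for l
    by (rule finite_subset[OF _ finite_words[of d]]) (use assms in auto)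
  have "card X = (\<Sum>l\<le>d. card (Pair l ` {w. (l, w) \<in> X}))"
    by (subst eq, rule card_UN_disjoint) (use fin in auto)
  also have "\<dots> = (\<Sum>l\<le>d. card {w. (l, w) \<in> X})"
    by (rule sum.cong) (auto simp: card_image inj_on_def)
  finally show ?thesis .
qed

lemma card_eq_sum_hit_count:
  assumes X: "X \<subseteq> bf_V d" and f: "switching_family d f"
  shows "card X = (\<Sum>a | length a = d. hit_count d X (switch_path f a))"
proof -
  let ?L = "{c :: bool list. length c = d}"
  let ?ind = "\<lambda>a l. if (l, switch_path f a l) \<in> X then 1 else 0 :: nat"
  have level: "card {w. (l, w) \<in> X} = (\<Sum>a\<in>?L. ?ind a l)" if l: "l \<le> d" for l
  proof -
    let ?g = "\<lambda>a. switch_path f a l"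
    have bij: "bij_betw ?g ?L ?L" by (rule switch_path_bij[OF f l])
    have "{w. (l, w) \<in> X} = ?g ` {a\<in>?L. (l, ?g a) \<in> X}"
    proof (intro equalityI subsetI)
      fix w assume "w \<in> {w. (l, w) \<in> X}"
      then have w: "(l, w) \<in> X" "w \<in> ?L" using X by auto
      then obtain a where "a \<in> ?L" "w = ?g a"
        using bij_betw_imp_surj_on[OF bij] by (metis imageE)
      then show "w \<in> ?g ` {a\<in>?L. (l, ?g a) \<in> X}" using w by auto
    qed auto
    moreover have "inj_on ?g {a\<in>?L. (l, ?g a) \<in> X}"
      using bij_betw_imp_inj_on[OF bij] by (rule inj_on_subset) blast
    ultimately have "card {w. (l, w) \<in> X} = card {a\<in>?L. (l, ?g a) \<in> X}"
      by (simp add: card_image)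
    also have "\<dots> = (\<Sum>a\<in>?L. ?ind a l)"
      by (simp add: sum.If_cases finite_words Int_def)
    finally show ?thesis .
  qed
  have "card X = (\<Sum>l\<le>d. \<Sum>a\<in>?L. ?ind a l)"
    using card_eq_sum_levels[OF X] level by simp
  also have "\<dots> = (\<Sum>a\<in>?L. \<Sum>l\<le>d. ?ind a l)"
    by (rule sum.swap)
  also have "\<dots> = (\<Sum>a\<in>?L. hit_count d X (switch_path f a))"
    unfolding hit_count_def by (simp add: sum.If_cases Int_def)
  finally show ?thesis .
qed

lemma card_eq_sum_columns:
  assumes "X \<subseteq> bf_V d"
  shows "card X = (\<Sum>c | length c = d. hit_count d X (\<lambda>l. c))"
proof -
  have "switch_path (\<lambda>l w. w) a = (\<lambda>l. a)" for a
  proof (rule ext)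
    show "switch_path (\<lambda>l w. w) a l = a" for l by (induction l) auto
  qed
  then show ?thesis
    using card_eq_sum_hit_count[OF assms, of "\<lambda>l w. w"] by (simp add: switching_family_def)
qed

text \<open>
  Two disjoint monotone paths \<open>W\<^sub>1\<close>, \<open>W\<^sub>2\<close> extend to a partition: at level \<open>l\<close> swap the two
  words of every edge pair used by \<open>W\<^sub>1\<close> or \<open>W\<^sub>2\<close> to switch, and nothing else.
\<close>

definition switches_at :: "(nat \<Rightarrow> bool list) \<Rightarrow> nat \<Rightarrow> bool list \<Rightarrow> bool" where
  "switches_at W l w \<longleftrightarrow> W (Suc l) \<noteq> W l \<and> (w = W l \<or> w = flip (W l) l)"

definition switch_along :: "(nat \<Rightarrow> bool list) \<Rightarrow> (nat \<Rightarrow> bool list) \<Rightarrow> nat \<Rightarrow> bool list \<Rightarrow> bool list" where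
  "switch_along W\<^sub>1 W\<^sub>2 l w = (if switches_at W\<^sub>1 l w \<or> switches_at W\<^sub>2 l w then flip w l else w)"

lemma switches_at_flip:
  assumes "length (W l) = d" "length w = d" "l < d"
  shows "switches_at W l (flip w l) = switches_at W l w"
  using assms flip_eq_flip_iff[of l w "W l"] unfolding switches_at_def by (metis flip_flip length_flip)

lemma switching_family_switch_along:
  assumes W\<^sub>1: "monotone_path d W\<^sub>1" and W\<^sub>2: "monotone_path d W\<^sub>2"
  shows "switching_family d (switch_along W\<^sub>1 W\<^sub>2)"
  unfolding switching_family_def
proof (intro allI impI conjI)
  fix l and w :: "bool list" assume l: "l < d" and w: "length w = d"
  have "length (W\<^sub>1 l) = d" "length (W\<^sub>2 l) = d"
    using monotone_segment_length[OF W\<^sub>1] monotone_segment_length[OF W\<^sub>2] l by auto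
  then show "switch_along W\<^sub>1 W\<^sub>2 l (switch_along W\<^sub>1 W\<^sub>2 l w) = w"
    using switches_at_flip[of W\<^sub>1 l d w] switches_at_flip[of W\<^sub>2 l d w] l w
    by (simp add: switch_along_def)
  show "switch_along W\<^sub>1 W\<^sub>2 l w = w \<or> switch_along W\<^sub>1 W\<^sub>2 l w = flip w l"
    unfolding switch_along_def by simp
qed

lemma switch_path_switch_along:
  assumes W\<^sub>1: "monotone_path d W\<^sub>1" and W\<^sub>2: "monotone_path d W\<^sub>2"
    and disj: "\<forall>l\<le>d. W\<^sub>1 l \<noteq> W\<^sub>2 l" and "l \<le> d"
  shows "switch_path (switch_along W\<^sub>1 W\<^sub>2) (W\<^sub>1 0) l = W\<^sub>1 l"
  using assms(4)
proof (induction l)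
  case (Suc l)
  then have l: "l < d" by simp
  have step: "W\<^sub>1 (Suc l) = W\<^sub>1 l \<or> W\<^sub>1 (Suc l) = flip (W\<^sub>1 l) l"
    "W\<^sub>2 (Suc l) = W\<^sub>2 l \<or> W\<^sub>2 (Suc l) = flip (W\<^sub>2 l) l"
    using monotone_segment_step[OF W\<^sub>1] monotone_segment_step[OF W\<^sub>2] l by auto
  have "length (W\<^sub>2 l) = d" using monotone_segment_length[OF W\<^sub>2] l by simp
  moreover have "W\<^sub>1 l \<noteq> W\<^sub>2 l" "W\<^sub>1 (Suc l) \<noteq> W\<^sub>2 (Suc l)" using disj l by auto
  ultimately have "\<not> switches_at W\<^sub>2 l (W\<^sub>1 l) \<or> W\<^sub>1 (Suc l) \<noteq> W\<^sub>1 l"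
    using step(2) unfolding switches_at_def by (metis flip_flip)
  then show ?case
    using Suc step(1) by (auto simp: switch_along_def switches_at_def)
qed simp

lemma card_le_two_disjoint_paths:
  assumes X: "mutual_visibility_set (bf_V d) (bf_E d) X"
    and W\<^sub>1: "monotone_path d W\<^sub>1" and W\<^sub>2: "monotone_path d W\<^sub>2" and disj: "\<forall>l\<le>d. W\<^sub>1 l \<noteq> W\<^sub>2 l"
  shows "card X + 4 \<le> 2 ^ Suc d + hit_count d X W\<^sub>1 + hit_count d X W\<^sub>2"
proof -
  let ?L = "{c :: bool list. length c = d}"
  let ?f = "switch_along W\<^sub>1 W\<^sub>2"
  let ?h = "\<lambda>a. hit_count d X (switch_path ?f a)"
  have f: "switching_family d ?f" by (rule switching_family_switch_along[OF W\<^sub>1 W\<^sub>2])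
  have ends: "W\<^sub>1 0 \<in> ?L" "W\<^sub>2 0 \<in> ?L" "W\<^sub>1 0 \<noteq> W\<^sub>2 0"
    using monotone_segment_length[OF W\<^sub>1] monotone_segment_length[OF W\<^sub>2] disj by auto
  have "?h (W\<^sub>1 0) = hit_count d X W\<^sub>1"
    by (rule hit_count_cong) (rule switch_path_switch_along[OF W\<^sub>1 W\<^sub>2 disj])
  moreover have "?f = switch_along W\<^sub>2 W\<^sub>1"
    by (auto simp: switch_along_def intro!: ext)
  then have "?h (W\<^sub>2 0) = hit_count d X W\<^sub>2"
    using switch_path_switch_along[OF W\<^sub>2 W\<^sub>1] disj by (metis hit_count_cong)
  moreover have "?h a \<le> 2" if "a \<in> ?L" for a
    using hit_count_le_2[OF X switch_path_monotone[OF f]] that by simp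
  moreover have "card (?L - {W\<^sub>1 0, W\<^sub>2 0}) = 2 ^ d - 2" "2 \<le> (2 :: nat) ^ d"
    using ends card_mono[OF finite_words, of "{W\<^sub>1 0, W\<^sub>2 0}" d]
    by (simp_all add: card_Diff_subset card_words finite_words)
  moreover have "card X = (\<Sum>a\<in>?L - {W\<^sub>1 0, W\<^sub>2 0}. ?h a) + (\<Sum>a\<in>{W\<^sub>1 0, W\<^sub>2 0}. ?h a)"
    using card_eq_sum_hit_count[OF _ f] X ends finite_words
    by (simp add: mutual_visibility_set_def sum.subset_diff[of "{W\<^sub>1 0, W\<^sub>2 0}" ?L])
  moreover have "(\<Sum>a\<in>?L - {W\<^sub>1 0, W\<^sub>2 0}. ?h a) \<le> (\<Sum>a\<in>?L - {W\<^sub>1 0, W\<^sub>2 0}. 2)"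
    by (rule sum_mono) (use calculation(3) in auto)
  ultimately show ?thesis using ends(3) by simp
qed

section \<open>The upper bound\<close>

lemma monotone_path_flip_top:
  assumes W: "monotone_path d W" and "0 < d"
  shows "monotone_path d (W(d := flip (W d) (d - 1)))"
  unfolding monotone_segment_def
proof (intro conjI allI impI)
  fix l assume "0 \<le> l \<and> l \<le> d"
  then show "length ((W(d := flip (W d) (d - 1))) l) = d"
    using monotone_segment_length[OF W] by simp
next
  fix l assume l: "0 \<le> l \<and> l < d"
  have step: "W (Suc l) = W l \<or> W (Suc l) = flip (W l) l" "length (W l) = d"
    using monotone_segment_step[OF W] monotone_segment_length[OF W] l by auto
  show "(W(d := flip (W d) (d - 1))) (Suc l) = (W(d := flip (W d) (d - 1))) l \<or>
      (W(d := flip (W d) (d - 1))) (Suc l) = flip ((W(d := flip (W d) (d - 1))) l) l"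
  proof (cases "Suc l = d")
    case True
    then show ?thesis using step l by auto
  qed (use step l in auto)
qed

lemma monotone_path_flip_bottom:
  assumes W: "monotone_path d W" and "0 < d"
  shows "monotone_path d (W(0 := flip (W 0) 0))"
  unfolding monotone_segment_def
proof (intro conjI allI impI)
  fix l assume "0 \<le> l \<and> l \<le> d"
  then show "length ((W(0 := flip (W 0) 0)) l) = d"
    using monotone_segment_length[OF W] by simp
next
  fix l assume l: "0 \<le> l \<and> l < d"
  have step: "W (Suc l) = W l \<or> W (Suc l) = flip (W l) l" "length (W l) = d"
    using monotone_segment_step[OF W] monotone_segment_length[OF W] l by auto
  show "(W(0 := flip (W 0) 0)) (Suc l) = (W(0 := flip (W 0) 0)) l \<or>
      (W(0 := flip (W 0) 0)) (Suc l) = flip ((W(0 := flip (W 0) 0)) l) l"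
  proof (cases "l = 0")
    case True
    then show ?thesis using step l by auto
  qed (use step in auto)
qed

lemma card_eq_column_deficit:
  assumes X: "X \<subseteq> bf_V d" and e: "length e = d"
    and full: "\<forall>c. length c = d \<longrightarrow> c \<noteq> e \<longrightarrow> hit_count d X (\<lambda>l. c) = 2"
  shows "card X + 2 = 2 ^ Suc d + hit_count d X (\<lambda>l. e)"
proof -
  let ?L = "{c :: bool list. length c = d}"
  have "card X = (\<Sum>c\<in>?L - {e}. hit_count d X (\<lambda>l. c)) + hit_count d X (\<lambda>l. e)"
    using card_eq_sum_columns[OF X] e finite_words by (simp add: sum.remove add.commute)
  also have "(\<Sum>c\<in>?L - {e}. hit_count d X (\<lambda>l. c)) = 2 * (2 ^ d - 1)"
    using full e by (simp add: card_Diff_singleton card_words finite_words)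
  finally have "card X = 2 * (2 ^ d - 1) + hit_count d X (\<lambda>l. e)" .
  moreover have "(1 :: nat) \<le> 2 ^ d" by simp
  ultimately show ?thesis by (simp only: power_Suc)
qed

lemma deficient_column:
  assumes X: "mutual_visibility_set (bf_V d) (bf_E d) X" and big: "2 ^ Suc d \<le> card X + 1"
  obtains e where "length e = d" "\<forall>c. length c = d \<longrightarrow> c \<noteq> e \<longrightarrow> hit_count d X (\<lambda>l. c) = 2"
proof (cases "\<exists>e. length e = d \<and> hit_count d X (\<lambda>l. e) \<noteq> 2")
  case True
  then obtain e where e: "length e = d" "hit_count d X (\<lambda>l. e) \<noteq> 2" by blast
  have "hit_count d X (\<lambda>l. c) = 2" if c: "length c = d" "c \<noteq> e" for c
  proof (rule ccontr)
    assume "hit_count d X (\<lambda>l. c) \<noteq> 2"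
    moreover have "hit_count d X (\<lambda>l. c) \<le> 2" "hit_count d X (\<lambda>l. e) \<le> 2"
      using hit_count_le_2[OF X monotone_path_const] c e by auto
    ultimately have "hit_count d X (\<lambda>l. c) \<le> 1" "hit_count d X (\<lambda>l. e) \<le> 1"
      using e(2) by linarith+
    then show False
      using card_le_two_disjoint_paths[OF X monotone_path_const[OF c(1)] monotone_path_const[OF e(1)]]
        c big by simp
  qed
  then show ?thesis using that e by blast
next
  case False
  then show ?thesis using that[of "replicate d False"] by auto
qed

lemma lowest_hit:
  assumes "hit_count d X (\<lambda>l. c) = 2"
  obtains i where "i < d" "(i, c) \<in> X" "\<forall>l<i. (l, c) \<notin> X"
proof -
  let ?S = "{l. l \<le> d \<and> (l, c) \<in> X}"
  have "card ?S = 2" using assms unfolding hit_count_def by simp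
  then obtain x y where xy: "?S = {x, y}" "x \<noteq> y" unfolding card_2_iff by blast
  then have "min x y \<in> ?S" "min x y < d" by (auto simp: min_def)
  moreover have "(l, c) \<notin> X" if l: "l < min x y" for l
  proof
    assume "(l, c) \<in> X"
    then have "l \<in> ?S" using less_trans[OF l \<open>min x y < d\<close>] by simp
    then show False using l xy(1) by auto
  qed
  ultimately show ?thesis using that by blast
qed

lemma gdist_over_top_le:
  assumes a: "length a = d" and "i < d" "j < d"
  shows "gdist (bf_V d) (bf_E d) (i, a) (j, flip a (d - 1)) \<le> (d - i) + (d - j)"
proof -
  let ?b = "flip a (d - 1)"
  define g where "g t = (if t \<le> d - i then (i + t, if i + t = d then ?b else a) else (2 * d - i - t, ?b))" for t
  have "walk_betw (bf_V d) (bf_E d) (g 0) (g ((d - i) + (d - j))) (map g [0..<Suc ((d - i) + (d - j))])"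
  proof (rule walk_betw_map_upt)
    show "\<forall>t\<le>d - i + (d - j). g t \<in> bf_V d" unfolding g_def using assms by auto
    show "\<forall>t<d - i + (d - j). bf_E d (g t) (g (Suc t))"
    proof (intro allI impI)
      fix t assume t: "t < d - i + (d - j)"
      show "bf_E d (g t) (g (Suc t))"
      proof (cases "Suc t \<le> d - i")
        case True
        then have "g t = (i + t, a)" "g (Suc t) = (Suc (i + t), if Suc (i + t) = d then ?b else a)"
          unfolding g_def by auto
        moreover have "(if Suc (i + t) = d then ?b else a) = a \<or>
            (if Suc (i + t) = d then ?b else a) = flip a (i + t)"
          by (cases "Suc (i + t) = d") auto
        ultimately show ?thesis using True assms by (simp add: bf_E_upI)
      next
        case False
        define m where "m = 2 * d - i - Suc t"
        have "g t = (Suc m, ?b)" "g (Suc t) = (m, ?b)" "m < d"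
          unfolding g_def m_def using False t assms by auto
        then show ?thesis using bf_E_sym[OF bf_E_upI[of m d ?b ?b]] a by simp
      qed
    qed
  qed
  moreover have "g 0 = (i, a)" "g ((d - i) + (d - j)) = (j, ?b)" unfolding g_def using assms by auto
  ultimately show ?thesis using gdist_le by fastforce
qed

lemma shortest_walk_over_top:
  assumes w: "walk_betw (bf_V d) (bf_E d) (i, a) (j, b) xs"
    and short: "length xs \<le> Suc ((d - i) + (d - j))"
    and differ: "a ! (d - 1) \<noteq> b ! (d - 1)" and "length a = d" "length b = d" "i < d" "j < d"
  shows "length xs = Suc ((d - i) + (d - j))"
    and "\<And>t. t \<le> d - i \<Longrightarrow> fst (xs ! t) = i + t"
    and "\<And>t. t \<le> d - j \<Longrightarrow> fst (rev xs ! t) = j + t"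
proof -
  note ends = walk_betw_ends[OF w]
  have "drop (d - 1) a ! 0 \<noteq> drop (d - 1) b ! 0" using differ assms(4-6) by simp
  then have "drop (d - 1) a \<noteq> drop (d - 1) b" by metis
  then obtain t where t: "t < length xs" "d - 1 < fst (xs ! t)"
    by (rule walk_betw_rises_above[OF w])
  have "xs ! t \<in> bf_V d" by (rule is_walk_nth_mem[OF ends(1) t(1)])
  then have "fst (xs ! t) \<le> d" by (cases "xs ! t") simp
  then have top: "fst (xs ! t) = d" using t(2) by linarith
  note bound = walk_level_bound[OF ends(1)]
  have "d \<le> i + t" "d \<le> j + (length xs - 1 - t)"
    using bound[of 0 t] bound[of t "length xs - 1"] t top ends by auto
  then have t_eq: "t = d - i" and len: "length xs = Suc ((d - i) + (d - j))"
    using short t(1) by auto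
  show "length xs = Suc ((d - i) + (d - j))" by (rule len)
  show "fst (xs ! s) = i + s" if "s \<le> d - i" for s
    by (rule walk_level_climbs[OF ends(1), of "d - i"]) (use that t_eq t top ends assms(6) in auto)
  have rw: "walk_betw (bf_V d) (bf_E d) (j, b) (i, a) (rev xs)" by (rule walk_betw_rev[OF w bf_E_sym])
  have "rev xs ! (d - j) = xs ! t" using len t_eq by (simp add: rev_nth)
  then show "fst (rev xs ! s) = j + s" if "s \<le> d - j" for s
    using walk_level_climbs[OF walk_betw_ends(1)[OF rw], of "d - j" j s] walk_betw_ends(3)[OF rw]
      that top len assms(7) by simp
qed

lemma climbing_prefix_hit_count:
  assumes w: "is_walk (bf_V d) (bf_E d) xs" and avoid: "internal xs \<inter> X = {}"
    and lv: "\<And>t. t \<le> d - i \<Longrightarrow> fst (xs ! t) = i + t" and long: "Suc (d - i) < length xs"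
    and below: "\<forall>l<i. (l, snd (xs ! 0)) \<notin> X"
  shows "hit_count d X (\<lambda>l. snd (xs ! (l - i))) \<le> 1"
proof (rule hit_count_le_1[where i = i], intro subsetI)
  fix l assume l: "l \<in> {l. l \<le> d \<and> (l, snd (xs ! (l - i))) \<in> X}"
  show "l \<in> {i}"
  proof (rule ccontr)
    assume "l \<notin> {i}"
    then consider "l < i" | "i < l" by fastforce
    then show False
    proof cases
      case 1
      then show False using l below by simp
    next
      case 2
      then have "xs ! (l - i) = (l, snd (xs ! (l - i)))"
        using lv[of "l - i"] l by (simp add: prod_eq_iff diff_le_mono)
      moreover have "xs ! (l - i) \<in> internal xs"
        by (rule nth_mem_internal) (use 2 l long in auto)
      ultimately show False using l avoid by auto
    qed
  qed
qed

text \<open>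
  Two monotone paths that meet only at the top and carry at most one point each force the
  neighbour \<open>[d, \<sigma>(d-1)]\<close> of their summit \<open>[d, \<sigma>]\<close> into a large \<open>X\<close>: otherwise moving the
  top of one of them there keeps both deficits.
\<close>

lemma top_neighbour_in_large_set:
  assumes X: "mutual_visibility_set (bf_V d) (bf_E d) X" and big: "2 ^ Suc d \<le> card X + 1"
    and "0 < d" and P: "monotone_path d P" and Q: "monotone_path d Q"
    and disj: "\<forall>l<d. P l \<noteq> Q l" and "P d = Q d"
    and hP: "hit_count d X P \<le> 1" and hQ: "hit_count d X Q \<le> 1"
  shows "(d, flip (Q d) (d - 1)) \<in> X"
proof (rule ccontr)
  let ?Q = "Q(d := flip (Q d) (d - 1))"
  assume notin: "(d, flip (Q d) (d - 1)) \<notin> X"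
  have len: "length (Q d) = d" using monotone_segment_length[OF Q] by simp
  have "\<forall>l\<le>d. P l \<noteq> ?Q l"
    using disj \<open>P d = Q d\<close> flip_neq[of "d - 1" "Q d"] len \<open>0 < d\<close> by (auto simp: le_less)
  from card_le_two_disjoint_paths[OF X P monotone_path_flip_top[OF Q \<open>0 < d\<close>] this]
  have "card X + 4 \<le> 2 ^ Suc d + hit_count d X P + hit_count d X ?Q" .
  moreover have "hit_count d X ?Q \<le> hit_count d X Q"
    unfolding hit_count_def using notin by (intro card_mono) auto
  ultimately show False using hP hQ big by simp
qed

lemma monotone_path_meets_full_columns:
  assumes X: "mutual_visibility_set (bf_V d) (bf_E d) X" and e: "length e = d"
    and full: "\<forall>c. length c = d \<longrightarrow> c \<noteq> e \<longrightarrow> hit_count d X (\<lambda>l. c) = 2"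
    and W: "monotone_path d W" and hW: "hit_count d X W \<le> 1"
  shows "\<exists>l\<le>d. W l = e"
proof (rule ccontr)
  assume "\<not> (\<exists>l\<le>d. W l = e)"
  then have "card X + 4 \<le> 2 ^ Suc d + hit_count d X W + hit_count d X (\<lambda>l. e)"
    using card_le_two_disjoint_paths[OF X W monotone_path_const[OF e]] by auto
  then show False
    using card_eq_column_deficit[OF _ e full] X hW by (simp add: mutual_visibility_set_def)
qed

text \<open>
  In a large \<open>X\<close>, a shortest \<open>X\<close>-avoiding path between the lowest points of \<open>X\<close> in two
  columns differing only in bit \<open>d - 1\<close> splits at its summit into two monotone paths, each
  carrying only its starting point.
\<close>

lemma visible_pair_over_top:
  assumes X: "mutual_visibility_set (bf_V d) (bf_E d) X" and a: "length a = d"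
    and i: "i < d" "(i, a) \<in> X" "\<forall>l<i. (l, a) \<notin> X"
    and j: "j < d" "(j, flip a (d - 1)) \<in> X" "\<forall>l<j. (l, flip a (d - 1)) \<notin> X"
  obtains P Q where "monotone_path d P" "monotone_path d Q" "P 0 = a" "Q 0 = flip a (d - 1)"
    "Q d = P d" "(d, P d) \<notin> X" "hit_count d X P \<le> 1" "hit_count d X Q \<le> 1"
proof -
  let ?b = "flip a (d - 1)"
  have "X_visible (bf_V d) (bf_E d) X (i, a) (j, ?b)"
    using X i j unfolding mutual_visibility_set_def by blast
  then obtain xs where xs: "walk_betw (bf_V d) (bf_E d) (i, a) (j, ?b) xs"
      "length xs = Suc (gdist (bf_V d) (bf_E d) (i, a) (j, ?b))" "internal xs \<inter> X = {}"
    by (rule X_visibleE)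
  have short: "length xs \<le> Suc ((d - i) + (d - j))"
    using xs(2) gdist_over_top_le[OF a i(1) j(1)] by simp
  have "a ! (d - 1) \<noteq> ?b ! (d - 1)" "length ?b = d" using a i(1) by (simp_all add: nth_flip)
  note over = shortest_walk_over_top[OF xs(1) short this(1) a this(2) i(1) j(1)]
  have rxs: "walk_betw (bf_V d) (bf_E d) (j, ?b) (i, a) (rev xs)" by (rule walk_betw_rev[OF xs(1) bf_E_sym])
  note ends = walk_betw_ends[OF xs(1)] walk_betw_ends[OF rxs]
  define P where "P l = snd (xs ! (l - i))" for l
  define Q where "Q l = snd (rev xs ! (l - j))" for l
  have "monotone_path d P"
    using climbing_walk_monotone_segment[OF ends(1) _ over(2), of "d - i"] over(1) i
    unfolding P_def by simp
  moreover have "monotone_path d Q"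
    using climbing_walk_monotone_segment[OF ends(5) _ over(3), of "d - j"] over(1) j
    unfolding Q_def by simp
  moreover have summit: "xs ! (d - i) = (d, P d)" "Q d = P d"
    using over i j unfolding P_def Q_def by (auto simp: prod_eq_iff rev_nth)
  moreover have "xs ! (d - i) \<in> internal xs" by (rule nth_mem_internal) (use over(1) i j in auto)
  then have "(d, P d) \<notin> X" using xs(3) summit by auto
  moreover have "hit_count d X P \<le> 1" unfolding P_def
    by (rule climbing_prefix_hit_count[OF ends(1) xs(3) over(2)]) (use over(1) j i ends(3) in auto)
  moreover have "hit_count d X Q \<le> 1" unfolding Q_def
    by (rule climbing_prefix_hit_count[OF ends(5) _ over(3)]) (use xs(3) over(1) j i ends(7) in auto)
  ultimately show ?thesis using that ends(3,7) unfolding P_def Q_def by simp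
qed

lemma top_of_deficient_column:
  assumes d: "2 \<le> d" and X: "mutual_visibility_set (bf_V d) (bf_E d) X"
    and big: "2 ^ Suc d \<le> card X + 1" and e: "length e = d"
    and full: "\<forall>c. length c = d \<longrightarrow> c \<noteq> e \<longrightarrow> hit_count d X (\<lambda>l. c) = 2"
  shows "(d, e) \<notin> X \<and> (d, flip e (d - 1)) \<in> X"
proof -
  define a where "a = flip e 0"
  define b where "b = flip a (d - 1)"
  have bits: "a ! (d - 1) = e ! (d - 1)" "b ! (d - 1) \<noteq> e ! (d - 1)"
    using e d by (auto simp: a_def b_def nth_flip)
  have ab: "length a = d" "length b = d" "a \<noteq> e" "b \<noteq> e"
    using bits e d flip_neq[of 0 e] by (auto simp: a_def b_def)
  obtain i where i: "i < d" "(i, a) \<in> X" "\<forall>l<i. (l, a) \<notin> X"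
    using lowest_hit[of d X a] full ab by blast
  obtain j where j: "j < d" "(j, b) \<in> X" "\<forall>l<j. (l, b) \<notin> X"
    using lowest_hit[of d X b] full ab by blast
  obtain P Q where P: "monotone_path d P" and Q: "monotone_path d Q" and "P 0 = a" "Q 0 = b"
      and summit: "Q d = P d" "(d, P d) \<notin> X" and hP: "hit_count d X P \<le> 1" and hQ: "hit_count d X Q \<le> 1"
    by (rule visible_pair_over_top[OF X ab(1) i j[unfolded b_def]]) (simp add: b_def)
  have bitP: "P l ! (d - 1) = a ! (d - 1)" and bitQ: "Q l ! (d - 1) = b ! (d - 1)" if "l < d" for l
    using monotone_segment_nth_eq[OF P, of 0 l "d - 1"] monotone_segment_nth_eq[OF Q, of 0 l "d - 1"]
      that \<open>P 0 = a\<close> \<open>Q 0 = b\<close> by auto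
  have "\<forall>l<d. P l \<noteq> Q l" using bitP bitQ bits by metis
  then have "(d, flip (Q d) (d - 1)) \<in> X"
    using top_neighbour_in_large_set[OF X big _ P Q _ _ hP hQ] d summit by simp
  moreover obtain l where "l \<le> d" "Q l = e"
    using monotone_path_meets_full_columns[OF X e full Q hQ] by blast
  moreover have "\<not> l < d" using bitQ[of l] \<open>Q l = e\<close> bits by auto
  ultimately show ?thesis using summit by auto
qed

lemma hit_count_reflect_column:
  assumes X: "X \<subseteq> bf_V d" and c: "length c = d"
  shows "hit_count d (bf_reflect d ` X) (\<lambda>l. c) = hit_count d X (\<lambda>l. rev c)"
proof -
  have "{l. l \<le> d \<and> (l, c) \<in> bf_reflect d ` X} = (\<lambda>l. d - l) ` {l. l \<le> d \<and> (l, rev c) \<in> X}"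
  proof (intro equalityI subsetI)
    fix l assume "l \<in> {l. l \<le> d \<and> (l, c) \<in> bf_reflect d ` X}"
    then have "l \<le> d" "(d - l, rev c) \<in> X" using bf_reflect_image_mem[OF X] by auto
    then show "l \<in> (\<lambda>l. d - l) ` {l. l \<le> d \<and> (l, rev c) \<in> X}"
      by (intro image_eqI[of _ _ "d - l"]) auto
  qed (use bf_reflect_image_mem[OF X] c in auto)
  moreover have "inj_on (\<lambda>l. d - l) {l. l \<le> d \<and> (l, rev c) \<in> X}"
    by (rule inj_onI) auto
  ultimately show ?thesis unfolding hit_count_def by (simp add: card_image)
qed

lemma bottom_of_deficient_column:
  assumes d: "2 \<le> d" and X: "mutual_visibility_set (bf_V d) (bf_E d) X"
    and big: "2 ^ Suc d \<le> card X + 1" and e: "length e = d"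
    and full: "\<forall>c. length c = d \<longrightarrow> c \<noteq> e \<longrightarrow> hit_count d X (\<lambda>l. c) = 2"
  shows "(0, e) \<notin> X \<and> (0, flip e 0) \<in> X"
proof -
  let ?Y = "bf_reflect d ` X"
  have XV: "X \<subseteq> bf_V d" using X by (simp add: mutual_visibility_set_def)
  have "(d, rev e) \<notin> ?Y \<and> (d, flip (rev e) (d - 1)) \<in> ?Y"
  proof (rule top_of_deficient_column[OF d])
    show "mutual_visibility_set (bf_V d) (bf_E d) ?Y"
      by (rule bf_reflect.mutual_visibility_set_image[OF X])
    show "2 ^ Suc d \<le> card ?Y + 1" using big bf_reflect.card_image_eq[OF XV] by simp
    show "\<forall>c. length c = d \<longrightarrow> c \<noteq> rev e \<longrightarrow> hit_count d ?Y (\<lambda>l. c) = 2"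
      using full hit_count_reflect_column[OF XV] by (metis length_rev rev_rev_ident)
  qed (use e in simp)
  moreover have "rev (flip (rev e) (d - 1)) = flip e 0"
    using rev_flip[of "rev e" d "d - 1"] e d by simp
  ultimately show ?thesis using bf_reflect_image_mem[OF XV] e by auto
qed

theorem mutual_visibility_set_card_le:
  assumes d: "2 \<le> d" and X: "mutual_visibility_set (bf_V d) (bf_E d) X"
  shows "card X + 2 \<le> 2 ^ Suc d"
proof (rule ccontr)
  assume "\<not> card X + 2 \<le> 2 ^ Suc d"
  then have big: "2 ^ Suc d \<le> card X + 1" by simp
  obtain e where e: "length e = d" and full: "\<forall>c. length c = d \<longrightarrow> c \<noteq> e \<longrightarrow> hit_count d X (\<lambda>l. c) = 2"
    by (rule deficient_column[OF X big])
  note top = top_of_deficient_column[OF d X big e full]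
  note bottom = bottom_of_deficient_column[OF d X big e full]
  have "hit_count d X (\<lambda>l. e) \<noteq> 0"
    using card_eq_column_deficit[OF _ e full] X big by (auto simp: mutual_visibility_set_def)
  then have "{l. l \<le> d \<and> (l, e) \<in> X} \<noteq> {}" unfolding hit_count_def by (rule contrapos_nn) simp
  then obtain k where k: "k \<le> d" "(k, e) \<in> X" by blast
  have "k \<noteq> 0" "k \<noteq> d" using k(2) top bottom by (metis fst_conv snd_conv)+
  define W where "W = (\<lambda>l. e)(0 := flip e 0, d := flip e (d - 1))"
  have "monotone_path d W"
    using monotone_path_flip_top[OF monotone_path_flip_bottom[OF monotone_path_const[OF e]]] d
    unfolding W_def by simp
  moreover have "{0, k, d} \<subseteq> {l. l \<le> d \<and> (l, W l) \<in> X}"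
    using k top bottom \<open>k \<noteq> 0\<close> \<open>k \<noteq> d\<close> d unfolding W_def by auto
  then have "card {0, k, d} \<le> hit_count d X W"
    unfolding hit_count_def by (rule card_mono[rotated]) (rule finite_subset[of _ "{..d}"], auto)
  moreover have "card {0, k, d} = 3" using \<open>k \<noteq> 0\<close> \<open>k \<noteq> d\<close> d by simp
  ultimately show False using hit_count_le_2[OF X] by fastforce
qed

section \<open>The lower bound\<close>

definition outer_set :: "nat \<Rightarrow> bool list \<Rightarrow> bool list \<Rightarrow> (nat \<times> bool list) set" where
  "outer_set d s t = {(0, c) | c. length c = d \<and> c \<noteq> s} \<union> {(d, c) | c. length c = d \<and> c \<noteq> t}"

lemma in_outer_set:
  "(l, w) \<in> outer_set d s t \<longleftrightarrow> (l = 0 \<and> length w = d \<and> w \<noteq> s) \<or> (l = d \<and> length w = d \<and> w \<noteq> t)"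
  unfolding outer_set_def by auto

lemma nth_take_append_drop:
  "length a = d \<Longrightarrow> length w = d \<Longrightarrow> b < d \<Longrightarrow> (take k a @ drop k w) ! b = (if b < k then a ! b else w ! b)"
  by (auto simp: nth_append min_def)

lemma monotone_path_splice:
  assumes a: "length a = d" and w: "length w = d"
  shows "monotone_path d (\<lambda>k. take k a @ drop k w)"
  unfolding monotone_segment_def
proof (intro conjI allI impI)
  fix l assume "0 \<le> l \<and> l \<le> d"
  then show "length (take l a @ drop l w) = d" using assms by simp
next
  fix l assume l: "0 \<le> l \<and> l < d"
  show "take (Suc l) a @ drop (Suc l) w = take l a @ drop l w \<or>
      take (Suc l) a @ drop (Suc l) w = flip (take l a @ drop l w) l"
  proof (cases "a ! l = w ! l")
    case True
    have "take (Suc l) a @ drop (Suc l) w = take l a @ drop l w"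
      by (rule nth_equalityI) (use assms l True in \<open>auto simp: nth_take_append_drop less_Suc_eq\<close>)
    then show ?thesis by simp
  next
    case False
    have "take (Suc l) a @ drop (Suc l) w = flip (take l a @ drop l w) l"
      by (rule nth_equalityI) (use assms l False in \<open>auto simp: nth_take_append_drop nth_flip less_Suc_eq\<close>)
    then show ?thesis by simp
  qed
qed

lemma outer_set_visible_bottom_top:
  assumes c: "length c = d" "length c' = d"
  shows "X_visible (bf_V d) (bf_E d) (outer_set d s t) (0, c) (d, c')"
proof -
  let ?U = "\<lambda>k. take k c' @ drop k c"
  have "walk_betw (bf_V d) (bf_E d) (0, ?U 0) (d, ?U d) (map (\<lambda>t. (0 + t, ?U (0 + t))) [0..<Suc (d - 0)])"
    by (rule monotone_segment_walk[OF monotone_path_splice[OF c(2,1)]]) simp_all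
  then have w: "walk_betw (bf_V d) (bf_E d) (0, c) (d, c') (map (\<lambda>t. (t, ?U t)) [0..<Suc d])"
    using c by simp
  show ?thesis
  proof (rule X_visibleI[OF w])
    have "x \<notin> outer_set d s t" if x: "x \<in> internal (map (\<lambda>t. (t, ?U t)) [0..<Suc d])" for x
    proof -
      obtain k where "0 < k" "k < d" "x = (k, ?U k)" using internal_map_upt[OF x] by blast
      then show ?thesis by (simp add: in_outer_set)
    qed
    then show "internal (map (\<lambda>t. (t, ?U t)) [0..<Suc d]) \<inter> outer_set d s t = {}" by blast
  next
    fix ys assume ys: "walk_betw (bf_V d) (bf_E d) (0, c) (d, c') ys"
    have "d \<le> 0 + (length ys - 1)" by (rule walk_betw_level_gap[OF ys])
    then show "length (map (\<lambda>t. (t, ?U t)) [0..<Suc d]) \<le> length ys"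
      using walk_betw_ends(2)[OF ys] by (cases ys) auto
  qed
qed

lemma monotone_paths_peak_walk:
  assumes U: "monotone_path d U" and U': "monotone_path d U'" and "h \<le> d" "U h = U' h"
  shows "walk_betw (bf_V d) (bf_E d) (0, U 0) (0, U' 0)
    (map (\<lambda>k. if k \<le> h then (k, U k) else (2 * h - k, U' (2 * h - k))) [0..<Suc (2 * h)])"
proof -
  define f where "f k = (if k \<le> h then (k, U k) else (2 * h - k, U' (2 * h - k)))" for k
  have f_down: "f k = (2 * h - k, U' (2 * h - k))" if "h \<le> k" for k
    using that assms(4) unfolding f_def by (cases "k = h") auto
  have "walk_betw (bf_V d) (bf_E d) (f 0) (f (2 * h)) (map f [0..<Suc (2 * h)])"
  proof (rule walk_betw_map_upt)
    show "\<forall>k\<le>2 * h. f k \<in> bf_V d"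
      unfolding f_def using monotone_segment_length[OF U] monotone_segment_length[OF U'] assms(3) by auto
    show "\<forall>k<2 * h. bf_E d (f k) (f (Suc k))"
    proof (intro allI impI)
      fix k assume k: "k < 2 * h"
      show "bf_E d (f k) (f (Suc k))"
      proof (cases "Suc k \<le> h")
        case True
        then show ?thesis unfolding f_def using monotone_segment_edge[OF U, of k] assms(3) by simp
      next
        case False
        define m where "m = 2 * h - Suc k"
        have "2 * h - k = Suc m" "m < d" using False k assms(3) unfolding m_def by auto
        then have "f k = (Suc m, U' (Suc m))" "f (Suc k) = (m, U' m)" "m < d"
          using f_down[of k] f_down[of "Suc k"] False unfolding m_def by auto
        then show ?thesis using bf_E_sym[OF monotone_segment_edge[OF U', of m]] by simp
      qed
    qed
  qed
  moreover have "f 0 = (0, U 0)" "f (2 * h) = (0, U' 0)" using f_down[of "2 * h"] unfolding f_def by simp_all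
  ultimately show ?thesis unfolding f_def by simp
qed

text \<open>
  Two bottom vertices \<open>[0, c]\<close>, \<open>[0, c']\<close> are joined by climbing to the level \<open>h\<close> above the
  last position where \<open>c\<close> and \<open>c'\<close> differ, adjusting the bits on the way, and descending.
  The summit lies in \<open>X\<close> only if \<open>h = d\<close>; then the bits are adjusted to \<open>t\<close>, the one
  top word missing from \<open>X\<close>.
\<close>

lemma outer_set_visible_bottom_bottom:
  assumes c: "length c = d" "length c' = d" and t: "length t = d"
  shows "X_visible (bf_V d) (bf_E d) (outer_set d s t) (0, c) (0, c')"
proof (cases "c = c'")
  case True
  then show ?thesis using X_visible_refl[of "(0, c)" "bf_V d"] c by simp
next
  case False
  define h where "h = (LEAST h. drop h c = drop h c')"
  have hd: "h \<le> d" unfolding h_def by (rule Least_le) (use c in simp)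
  have heq: "drop h c = drop h c'" unfolding h_def by (rule LeastI[of _ d]) (use c in simp)
  have h0: "h \<noteq> 0" using heq False by (metis drop0)
  have hne: "drop (h - 1) c \<noteq> drop (h - 1) c'"
    using Least_le[of "\<lambda>h. drop h c = drop h c'" "h - 1"] h0 unfolding h_def[symmetric] by auto
  define \<tau> where "\<tau> = (if h < d then c' else t)"
  have \<tau>: "length \<tau> = d" unfolding \<tau>_def using c t by simp
  define U where "U k = take k \<tau> @ drop k c" for k
  define U' where "U' k = take k \<tau> @ drop k c'" for k
  define f where "f k = (if k \<le> h then (k, U k) else (2 * h - k, U' (2 * h - k)))" for k
  have U: "monotone_path d U" and U': "monotone_path d U'"
    unfolding U_def U'_def using monotone_path_splice \<tau> c by auto
  have "U h = U' h" unfolding U_def U'_def using heq by simp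
  from monotone_paths_peak_walk[OF U U' hd this]
  have w: "walk_betw (bf_V d) (bf_E d) (0, c) (0, c') (map f [0..<Suc (2 * h)])"
    unfolding f_def U_def U'_def by simp
  show ?thesis
  proof (rule X_visibleI[OF w])
    have "x \<notin> outer_set d s t" if x: "x \<in> internal (map f [0..<Suc (2 * h)])" for x
    proof -
      obtain k where k: "0 < k" "k < 2 * h" "x = f k" using internal_map_upt[OF x] by blast
      have "U d = t" if "h = d" using that \<tau> c unfolding U_def \<tau>_def by simp
      then show ?thesis using k hd unfolding f_def by (auto simp: in_outer_set)
    qed
    then show "internal (map f [0..<Suc (2 * h)]) \<inter> outer_set d s t = {}" by blast
  next
    fix ys assume "walk_betw (bf_V d) (bf_E d) (0, c) (0, c') ys"
    from walk_betw_length_suffix_differ[OF this hne]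
    show "length (map f [0..<Suc (2 * h)]) \<le> length ys" using h0 by simp
  qed
qed

lemma outer_set_subset: "outer_set d s t \<subseteq> bf_V d"
  unfolding outer_set_def by auto

lemma bf_reflect_outer_set: "bf_reflect d ` outer_set d s t = outer_set d (rev t) (rev s)"
  by (auto simp: set_eq_iff bf_reflect_image_mem[OF outer_set_subset] in_outer_set)

lemma mutual_visibility_set_outer_set:
  assumes st: "length s = d" "length t = d"
  shows "mutual_visibility_set (bf_V d) (bf_E d) (outer_set d s t)"
  unfolding mutual_visibility_set_def
proof (intro conjI ballI)
  show "outer_set d s t \<subseteq> bf_V d" by (rule outer_set_subset)
next
  fix x y assume x: "x \<in> outer_set d s t" and y: "y \<in> outer_set d s t"
  obtain l w l' w' where xy: "x = (l, w)" "y = (l', w')" by fastforce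
  let ?Y = "outer_set d (rev t) (rev s)"
  have reflect: "X_visible (bf_V d) (bf_E d) (outer_set d s t) (bf_reflect d p) (bf_reflect d q)"
    if "X_visible (bf_V d) (bf_E d) ?Y p q" "p \<in> bf_V d" "q \<in> bf_V d" for p q
    using bf_reflect.X_visible_image[OF that(1) outer_set_subset that(2,3)]
      bf_reflect_outer_set[of d "rev t" "rev s"] by simp
  have lw: "length w = d" "length w' = d" using x y xy by (auto simp: in_outer_set)
  consider "l = 0" "l' = 0" | "l = 0" "l' = d" | "l = d" "l' = 0" | "l = d" "l' = d"
    using x y xy by (auto simp: in_outer_set)
  then show "X_visible (bf_V d) (bf_E d) (outer_set d s t) x y"
  proof cases
    case 1
    then show ?thesis using outer_set_visible_bottom_bottom[OF lw st(2)] xy by simp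
  next
    case 2
    then show ?thesis using outer_set_visible_bottom_top[OF lw] xy by simp
  next
    case 3
    have "X_visible (bf_V d) (bf_E d) ?Y (0, rev w) (d, rev w')"
      by (rule outer_set_visible_bottom_top) (use lw in auto)
    from reflect[OF this] show ?thesis using 3 xy lw by simp
  next
    case 4
    have "X_visible (bf_V d) (bf_E d) ?Y (0, rev w) (0, rev w')"
      by (rule outer_set_visible_bottom_bottom) (use lw st in auto)
    from reflect[OF this] show ?thesis using 4 xy lw by simp
  qed
qed

lemma card_outer_set:
  assumes "0 < d" "length s = d" "length t = d"
  shows "card (outer_set d s t) + 2 = 2 ^ Suc d"
proof -
  let ?L = "{c :: bool list. length c = d}"
  have "outer_set d s t = Pair (0 :: nat) ` (?L - {s}) \<union> Pair d ` (?L - {t})"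
    unfolding outer_set_def by auto
  moreover have "card (Pair (0 :: nat) ` (?L - {s}) \<union> Pair d ` (?L - {t})) =
      card (Pair (0 :: nat) ` (?L - {s})) + card (Pair d ` (?L - {t}))"
    by (rule card_Un_disjoint) (use assms(1) finite_words in auto)
  moreover have "card (Pair l ` (?L - {w})) = 2 ^ d - 1" if "length w = d" for l :: nat and w
    using that by (subst card_image) (auto simp: inj_on_def card_Diff_singleton card_words finite_words)
  ultimately have "card (outer_set d s t) = 2 * (2 ^ d - 1)" using assms(2,3) by simp
  moreover have "(1 :: nat) \<le> 2 ^ d" by simp
  ultimately show ?thesis by (simp only: power_Suc)
qed

theorem theorem5p4:
  fixes d :: nat
  assumes "d \<ge> 2"
  shows "mu (bf_V d) (bf_E d) = 2 ^ (d + 1) - 2"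
proof -
  let ?S = "{card X | X. mutual_visibility_set (bf_V d) (bf_E d) X}"
  let ?z = "replicate d False"
  have "finite ?S"
    by (rule finite_subset[of _ "card ` Pow (bf_V d)"])
      (use finite_bf_V in \<open>auto simp: mutual_visibility_set_def\<close>)
  moreover have "y \<le> 2 ^ (d + 1) - 2" if "y \<in> ?S" for y
    using that mutual_visibility_set_card_le[OF assms] by fastforce
  moreover have "2 ^ (d + 1) - 2 \<in> ?S"
    using mutual_visibility_set_outer_set[of ?z d ?z] card_outer_set[of d ?z ?z] assms
    by (intro CollectI exI[of _ "outer_set d ?z ?z"]) auto
  ultimately show ?thesis unfolding mu_def by (rule Max_eqI)
qed

end
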